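(* Let $n\ge1$. As polynomials in the indeterminates $x$ and $y$ with coefficients in $\mathbb{Q}[\mathfrak{S}_n]$, \[\rho(x)\phi(y)=\rho(xy),\qquad \overline{\rho}(x)\phi(y)=\overline{\rho}(xy),\] where $\phi(y)=\sum_{\pi\in\mathfrak{S}_n}\binom{y+n-1-\operatorname{des}(\pi)}{n}\pi$, $\rho(x)=\sum_{\pi\in\mathfrak{S}_n}\Omega'(\pi;x/2)\pi$ and $\overline{\rho}(x)=\sum_{\pi\in\mathfrak{S}_n}\overline{\Omega}'(\pi;x/2)\pi$.
   Context: $\mathfrak{S}_n$ is the symmetric group on $[n]$, permutations are words $(\pi(1),\dots,\pi(n))$, and multiplication in $\mathbb{Q}[\mathfrak{S}_n]$ is composition. $\operatorname{des}(\pi)$ is the number of $i\in[n-1]$ with $\pi(i)>\pi(i+1)$, and $\binom{y+m}{n}$ denotes the polynomial $(y+m)(y+m-1)\cdots(y+m-n+1)/n!$ in $y$. Let $Z$ be a finite totally ordered set each of whose elements is "plus-type" or "minus-type". For $\pi\in\mathfrak{S}_n$ let $N(\pi;Z)$ be the number of sequences $(a_1,\dots,a_n)\in Z^n$ with $a_1\le\dots\le a_n$ such that for every $s\in[n-1]$: if $\pi(s)<\pi(s+1)$ then $a_s<a_{s+1}$ or ($a_s=a_{s+1}$ is plus-type); if $\pi(s)>\pi(s+1)$ then $a_s<a_{s+1}$ or ($a_s=a_{s+1}$ is minus-type). For a positive integer $k$, $\Omega'(\pi;k)=N(\pi;\{\bar1<1<\dots<\bar k<k\})$ and $\overline{\Omega}'(\pi;k)=N(\pi;\{0<\bar1<1<\dots<\overline{k-1}<k-1<\bar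 k\})$, with $0$ and unbarred $j$ plus-type and barred $\bar j$ minus-type. As functions of $k$ these are restrictions of unique polynomials with rational coefficients, denoted by the same symbols. *)

theory Defs
  imports "HOL-Combinatorics.Permutations" "HOL-Computational_Algebra.Polynomial"
begin

definition Sn :: "nat \<Rightarrow> (nat \<Rightarrow> nat) set" where
  "Sn n = {p. p permutes {1..n}}"

definition des :: "nat \<Rightarrow> (nat \<Rightarrow> nat) \<Rightarrow> nat" where
  "des n p = card {i \<in> {1..n-1}. p i > p (Suc i)}"

text \<open>N(pi;Z): Z a finite totally ordered set, plus marks plus-type elements
  (the others are minus-type). The sequence (a_1,...,a_n) is the list as with
  a_s = as ! (s-1).\<close>
definition Ncount :: "nat \<Rightarrow> (nat \<Rightarrow> nat) \<Rightarrow> 'a::linorder set \<Rightarrow> ('a \<Rightarrow> bool) \<Rightarrow> nat" where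
  "Ncount n p Z pluset = card {as. length as = n \<and> set as \<subseteq> Z \<and> sorted as \<and>
     (\<forall>s\<in>{1..n-1}.
        (p s < p (Suc s) \<longrightarrow> as!(s-1) < as!s \<or> (as!(s-1) = as!s \<and> pluset (as!s))) \<and>
        (p s > p (Suc s) \<longrightarrow> as!(s-1) < as!s \<or> (as!(s-1) = as!s \<and> \<not> pluset (as!s))))}"

text \<open>Encoding: Omega' uses Z = {bar1 < 1 < ... < bar k < k}, encoded as 1..2k with
  bar j = 2j-1 (minus-type, odd) and j = 2j (pluset-type, even).
  OmegaBar' uses Z = {0 < bar1 < 1 < ... < bar(k-1) < k-1 < bar k}, encoded as 0..2k-1
  with 0 and j = 2j pluset-type (even), bar j = 2j-1 minus-type (odd).\<close>
definition Omega' :: "nat \<Rightarrow> (nat \<Rightarrow> nat) \<Rightarrow> nat \<Rightarrow> nat" where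
  "Omega' n p k = Ncount n p {1..2*k} even"

definition OmegaBar' :: "nat \<Rightarrow> (nat \<Rightarrow> nat) \<Rightarrow> nat \<Rightarrow> nat" where
  "OmegaBar' n p k = Ncount n p {0..2*k-1} even"

definition Omega'_poly :: "nat \<Rightarrow> (nat \<Rightarrow> nat) \<Rightarrow> rat poly" where
  "Omega'_poly n p = (THE q. \<forall>k\<ge>1. poly q (of_nat k) = of_nat (Omega' n p k))"

definition OmegaBar'_poly :: "nat \<Rightarrow> (nat \<Rightarrow> nat) \<Rightarrow> rat poly" where
  "OmegaBar'_poly n p = (THE q. \<forall>k\<ge>1. poly q (of_nat k) = of_nat (OmegaBar' n p k))"

definition ga_mult :: "nat \<Rightarrow> ((nat \<Rightarrow> nat) \<Rightarrow> rat) \<Rightarrow> ((nat \<Rightarrow> nat) \<Rightarrow> rat) \<Rightarrow> (nat \<Rightarrow> nat) \<Rightarrow> rat" where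
  "ga_mult n f g s = (\<Sum>(t, u) \<in> {(t, u). t \<in> Sn n \<and> u \<in> Sn n \<and> t \<circ> u = s}. f t * g u)"

definition phi :: "nat \<Rightarrow> rat \<Rightarrow> (nat \<Rightarrow> nat) \<Rightarrow> rat" where
  "phi n y p = (y + of_nat (n - 1 - des n p)) gchoose n"

definition rho :: "nat \<Rightarrow> rat \<Rightarrow> (nat \<Rightarrow> nat) \<Rightarrow> rat" where
  "rho n x p = poly (Omega'_poly n p) (x / 2)"

definition rhobar :: "nat \<Rightarrow> rat \<Rightarrow> (nat \<Rightarrow> nat) \<Rightarrow> rat" where
  "rhobar n x p = poly (OmegaBar'_poly n p) (x / 2)"

end

theory Submission
  imports Defs "HOL-Library.Product_Lexorder"
begin

(* A sequence counted by N(pi; Z) is the same as a labelling g of the letters 1..n by Z such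
   that pi lists the letters in increasing order of the key (g x, x) or (g x, -x), according as
   g x is plus- or minus-type; every labelling is compatible in this sense with exactly one
   permutation. If Z is an interval of length L * m with L even, writing each label as
   L * h + r with the residue r in an interval of length L splits a labelling compatible with s
   into a labelling of the residues compatible with some t and a labelling h of the positions,
   with only plus-type ties, compatible with some u, where t o u = s. The labellings h are
   counted by binomial(m + n - 1 - des u, n), so
     Omega'(s; k m) = sum over t o u = s of Omega'(t; k) * binomial(m + n - 1 - des u, n),
   and likewise for OmegaBar'. Both sides are polynomials in k and in m, hence the identity
   holds for all rational arguments; with x = 2 k and y = m it is the theorem. *)

section \<open>Permutations sorting by a key\<close>

definition strictly_sorts :: "nat \<Rightarrow> (nat \<Rightarrow> 'b::linorder) \<Rightarrow> (nat \<Rightarrow> nat) \<Rightarrow> bool" where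
  "strictly_sorts n k p \<longleftrightarrow> (\<forall>s\<in>{1..n-1}. k (p s) < k (p (Suc s)))"

lemma Ball_atLeastAtMost_1_diff_1_iff:
  "(\<forall>s\<in>{1..n-1}. P s) \<longleftrightarrow> (\<forall>i. Suc i < n \<longrightarrow> P (Suc i))"
proof (intro iffI allI impI ballI)
  fix s assume "\<forall>i. Suc i < n \<longrightarrow> P (Suc i)" "s \<in> {1..n-1}"
  then show "P s" by (cases s) auto
qed auto

lemma strictly_sorts_iff_sorted_wrt:
  "strictly_sorts n k p \<longleftrightarrow> sorted_wrt (<) (map (\<lambda>i. k (p (Suc i))) [0..<n])"
proof -
  have "transp ((<) :: 'b::linorder \<Rightarrow> _)" by (auto intro: transpI)
  then show ?thesis
    unfolding strictly_sorts_def Ball_atLeastAtMost_1_diff_1_iff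
    by (simp add: sorted_wrt_iff_nth_Suc_transp)
qed

lemma strictly_sorts_less:
  assumes "strictly_sorts n k p" "1 \<le> i" "i < j" "j \<le> n"
  shows "k (p i) < k (p j)"
  using sorted_wrt_nth_less[OF assms(1)[unfolded strictly_sorts_iff_sorted_wrt], of "i - 1" "j - 1"]
    assms(2-4)
  by auto

lemma set_map_permutes_atLeastAtMost:
  assumes "p permutes {1..n}"
  shows "set (map (\<lambda>i. k (p (Suc i))) [0..<n]) = k ` {1..n}"
proof -
  have "set (map (\<lambda>i. k (p (Suc i))) [0..<n]) = (\<lambda>i. k (p i)) ` Suc ` {0..<n}"
    by (simp only: set_map set_upt image_image)
  also have "Suc ` {0..<n} = {1..n}"
    by (simp add: atLeastLessThanSuc_atLeastAtMost)
  finally show ?thesis by (metis image_image permutes_image[OF assms])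
qed

lemma strictly_sorts_unique:
  assumes p: "p permutes {1..n}" and q: "q permutes {1..n}" and k: "inj_on k {1..n}"
    and "strictly_sorts n k p" "strictly_sorts n k q"
  shows "p = q"
proof
  fix i
  show "p i = q i"
  proof (cases "i \<in> {1..n}")
    case True
    have "map (\<lambda>i. k (p (Suc i))) [0..<n] = map (\<lambda>i. k (q (Suc i))) [0..<n]"
      by (metis strict_sorted_equal strictly_sorts_iff_sorted_wrt assms(4,5)
          set_map_permutes_atLeastAtMost[OF p] set_map_permutes_atLeastAtMost[OF q])
    then have "k (p (Suc j)) = k (q (Suc j))" if "j < n" for j
      using that by simp
    from this[of "i - 1"] True have "k (p i) = k (q i)" by auto
    then show ?thesis
      using True k permutes_in_image[OF p] permutes_in_image[OF q] by (auto dest: inj_onD)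
  next
    case False
    then show ?thesis using p q by (simp add: permutes_not_in)
  qed
qed

lemma strictly_sorts_exists:
  assumes k: "inj_on k {1..n}"
  obtains p where "p permutes {1..n}" "strictly_sorts n k p"
proof
  define xs where "xs = sorted_list_of_set (k ` {1..n})"
  have len: "length xs = n" and set_xs: "set xs = k ` {1..n}" and sorted_xs: "sorted_wrt (<) xs"
    using card_image[OF k] by (simp_all add: xs_def)
  define p where "p i = (if i \<in> {1..n} then the_inv_into {1..n} k (xs ! (i - 1)) else i)" for i
  have kp: "k (p i) = xs ! (i - 1)" and p_in: "p i \<in> {1..n}" if "i \<in> {1..n}" for i
  proof -
    have "xs ! (i - 1) \<in> k ` {1..n}" using that len set_xs[symmetric] by auto
    then show "k (p i) = xs ! (i - 1)" "p i \<in> {1..n}"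
      using that k the_inv_into_into[OF k _ order_refl] by (simp_all add: p_def f_the_inv_into_f)
  qed
  have "inj_on p {1..n}"
  proof (rule inj_onI)
    fix i j assume ij: "i \<in> {1..n}" "j \<in> {1..n}" and "p i = p j"
    then have "xs ! (i - 1) = xs ! (j - 1)" using kp by metis
    moreover have "distinct xs" using sorted_xs by (simp add: strict_sorted_iff)
    ultimately show "i = j" using ij len by (fastforce simp: nth_eq_iff_index_eq)
  qed
  moreover have "p ` {1..n} = {1..n}"
    using calculation p_in by (intro endo_inj_surj) auto
  ultimately have "bij_betw p {1..n} {1..n}" by (simp add: bij_betw_def)
  then show "p permutes {1..n}" by (rule bij_imp_permutes) (auto simp: p_def)
  show "strictly_sorts n k p"
    unfolding strictly_sorts_def
  proof
    fix s assume s: "s \<in> {1..n-1}"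
    then have "xs ! (s - 1) < xs ! s"
      using sorted_wrt_nth_less[OF sorted_xs, of "s - 1" s] len by auto
    then show "k (p s) < k (p (Suc s))" using s kp[of s] kp[of "Suc s"] by auto
  qed
qed

section \<open>Compatible labellings\<close>

definition tie_key :: "('a::linorder \<Rightarrow> bool) \<Rightarrow> (nat \<Rightarrow> 'a) \<Rightarrow> nat \<Rightarrow> 'a \<times> int" where
  "tie_key P g x = (g x, if P (g x) then int x else - int x)"

abbreviation compatible :: "nat \<Rightarrow> (nat \<Rightarrow> nat) \<Rightarrow> ('a::linorder \<Rightarrow> bool) \<Rightarrow> (nat \<Rightarrow> 'a) \<Rightarrow> bool" where
  "compatible n p P g \<equiv> strictly_sorts n (tie_key P g) p"

definition compatible_labellings ::
    "nat \<Rightarrow> (nat \<Rightarrow> nat) \<Rightarrow> 'a::linorder set \<Rightarrow> ('a \<Rightarrow> bool) \<Rightarrow> (nat \<Rightarrow> 'a) set" where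
  "compatible_labellings n p Z P = {g \<in> {1..n} \<rightarrow>\<^sub>E Z. compatible n p P g}"

lemma inj_on_tie_key: "inj_on (tie_key P g) A"
  by (rule inj_onI) (auto simp: tie_key_def split: if_splits)

lemma compatible_unique:
  "p \<in> Sn n \<Longrightarrow> q \<in> Sn n \<Longrightarrow> compatible n p P g \<Longrightarrow> compatible n q P g \<Longrightarrow> p = q"
  unfolding Sn_def using strictly_sorts_unique[OF _ _ inj_on_tie_key] by blast

lemma compatible_exists:
  obtains p where "p \<in> Sn n" "compatible n p P g"
  using strictly_sorts_exists[OF inj_on_tie_key] by (metis Sn_def mem_Collect_eq)

lemma tie_key_less_iff:
  assumes "x \<noteq> y"
  shows "tie_key P g x < tie_key P g y \<longleftrightarrow>
    g x \<le> g y \<and> (x < y \<longrightarrow> g x < g y \<or> (g x = g y \<and> P (g y))) \<and>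
     (x > y \<longrightarrow> g x < g y \<or> (g x = g y \<and> \<not> P (g y)))"
  using assms unfolding tie_key_def less_prod_def by (cases "g x = g y") (auto simp: le_less)

lemma sorted_iff_adjacent:
  "length as = n \<Longrightarrow> sorted as \<longleftrightarrow> (\<forall>s\<in>{1..n-1}. as!(s-1) \<le> as!s)"
  unfolding Ball_atLeastAtMost_1_diff_1_iff by (simp add: sorted_iff_nth_Suc)

lemma Ncount_condition_iff_compatible:
  assumes "inj p" "length as = n" "\<forall>i<n. as ! i = g (p (Suc i))"
  shows "(sorted as \<and> (\<forall>s\<in>{1..n-1}.
        (p s < p (Suc s) \<longrightarrow> as!(s-1) < as!s \<or> (as!(s-1) = as!s \<and> P (as!s))) \<and>
        (p s > p (Suc s) \<longrightarrow> as!(s-1) < as!s \<or> (as!(s-1) = as!s \<and> \<not> P (as!s)))))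
    \<longleftrightarrow> compatible n p P g"
  unfolding sorted_iff_adjacent[OF assms(2)] strictly_sorts_def ball_conj_distrib[symmetric]
proof (intro ball_cong refl)
  fix s assume "s \<in> {1..n-1}"
  then have "s - 1 < n" "s < n" "Suc (s - 1) = s" by auto
  then have "as!(s-1) = g (p s)" "as!s = g (p (Suc s))" using assms(3) by metis+
  moreover have "p s \<noteq> p (Suc s)" using assms(1) by (simp add: inj_eq)
  ultimately show "(as!(s-1) \<le> as!s \<and>
        (p s < p (Suc s) \<longrightarrow> as!(s-1) < as!s \<or> (as!(s-1) = as!s \<and> P (as!s))) \<and>
        (p s > p (Suc s) \<longrightarrow> as!(s-1) < as!s \<or> (as!(s-1) = as!s \<and> \<not> P (as!s))))
      \<longleftrightarrow> tie_key P g (p s) < tie_key P g (p (Suc s))"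
    by (simp add: tie_key_less_iff)
qed

lemma bij_betw_labelling_word:
  assumes p: "p permutes {1..n}"
  shows "bij_betw (\<lambda>g. map (\<lambda>i. g (p (Suc i))) [0..<n]) ({1..n} \<rightarrow>\<^sub>E Z)
    {as. length as = n \<and> set as \<subseteq> Z}"
proof (rule bij_betw_byWitness[where
      f' = "\<lambda>as x. if x \<in> {1..n} then as ! (inv p x - 1) else undefined"])
  have p_in: "p (Suc i) \<in> {1..n}" if "i < n" for i
    using that by (intro permutes_in_image[OF p, THEN iffD2]) auto
  have inv_p_in: "inv p x - 1 < n" "Suc (inv p x - 1) = inv p x" if "x \<in> {1..n}" for x
  proof -
    have "inv p x \<in> {1..n}" using that by (rule permutes_in_image[OF permutes_inv[OF p], THEN iffD2])
    then show "inv p x - 1 < n" "Suc (inv p x - 1) = inv p x" by auto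
  qed
  show "\<forall>g\<in>{1..n} \<rightarrow>\<^sub>E Z. (\<lambda>x. if x \<in> {1..n} then map (\<lambda>i. g (p (Suc i))) [0..<n] ! (inv p x - 1)
      else undefined) = g"
    using inv_p_in by (auto simp: fun_eq_iff permutes_inverses(1)[OF p])
  show "\<forall>as\<in>{as. length as = n \<and> set as \<subseteq> Z}.
      map (\<lambda>i. if p (Suc i) \<in> {1..n} then as ! (inv p (p (Suc i)) - 1) else undefined) [0..<n] = as"
    using p_in by (auto intro!: nth_equalityI simp: permutes_inverses(2)[OF p])
  show "(\<lambda>g. map (\<lambda>i. g (p (Suc i))) [0..<n]) ` ({1..n} \<rightarrow>\<^sub>E Z) \<subseteq> {as. length as = n \<and> set as \<subseteq> Z}"
    using p_in by (fastforce simp: PiE_iff)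
  show "(\<lambda>as x. if x \<in> {1..n} then as ! (inv p x - 1) else undefined) `
      {as. length as = n \<and> set as \<subseteq> Z} \<subseteq> {1..n} \<rightarrow>\<^sub>E Z"
    using inv_p_in by auto
qed

lemma Ncount_eq_card_compatible_labellings:
  assumes "p \<in> Sn n"
  shows "Ncount n p Z P = card (compatible_labellings n p Z P)"
proof -
  have p: "p permutes {1..n}" using assms by (simp add: Sn_def)
  let ?cond = "\<lambda>as. sorted as \<and> (\<forall>s\<in>{1..n-1}.
        (p s < p (Suc s) \<longrightarrow> as!(s-1) < as!s \<or> (as!(s-1) = as!s \<and> P (as!s))) \<and>
        (p s > p (Suc s) \<longrightarrow> as!(s-1) < as!s \<or> (as!(s-1) = as!s \<and> \<not> P (as!s))))"
  have "bij_betw (\<lambda>g. map (\<lambda>i. g (p (Suc i))) [0..<n]) (compatible_labellings n p Z P)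
      {as \<in> {as. length as = n \<and> set as \<subseteq> Z}. ?cond as}"
    unfolding compatible_labellings_def
    by (rule bij_betw_Collect[OF bij_betw_labelling_word[OF p]],
        rule Ncount_condition_iff_compatible[OF permutes_inj[OF p]]) simp_all
  then show ?thesis
    unfolding Ncount_def by (simp add: bij_betw_same_card)
qed

section \<open>Splitting labels into blocks and residues\<close>

definition factorizations :: "nat \<Rightarrow> (nat \<Rightarrow> nat) \<Rightarrow> ((nat \<Rightarrow> nat) \<times> (nat \<Rightarrow> nat)) set" where
  "factorizations n s = {(t, u). t \<in> Sn n \<and> u \<in> Sn n \<and> t \<circ> u = s}"

lemma finite_Sn: "finite (Sn n)"
  unfolding Sn_def by (rule finite_permutations) simp

lemma finite_factorizations: "finite (factorizations n s)"
  by (rule finite_subset[of _ "Sn n \<times> Sn n"]) (auto simp: factorizations_def finite_Sn)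

lemma ga_mult_eq_sum_factorizations:
  "ga_mult n f g s = (\<Sum>(t, u) \<in> factorizations n s. f t * g u)"
  by (simp add: ga_mult_def factorizations_def)

lemma mult_add_eq_mult_add_interval:
  fixes L :: nat
  assumes "a \<le> z" "z < a + L" "a \<le> z'" "z' < a + L" "L * k + z = L * k' + z'"
  shows "z = z'" "k = k'"
proof -
  obtain d d' where d: "z = a + d" "z' = a + d'" "d < L" "d' < L"
    using assms(1-4) by (metis add_less_cancel_left le_iff_add)
  then have "(L * k + d) mod L = (L * k' + d') mod L"
    using assms(5) by simp
  then show "z = z'" using d by simp
  with assms(5) show "k = k'" using d by simp
qed

lemma finite_compatible_labellings: "finite Z \<Longrightarrow> finite (compatible_labellings n p Z P)"
  unfolding compatible_labellings_def
  by (rule finite_subset[of _ "{1..n} \<rightarrow>\<^sub>E Z"]) (auto intro: finite_PiE)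

(* The block index h is a labelling of positions, read at the position inv t x of the letter x
   in the word of t. *)
definition combine :: "nat \<Rightarrow> nat \<Rightarrow> (nat \<Rightarrow> nat) \<Rightarrow> (nat \<Rightarrow> nat) \<Rightarrow> (nat \<Rightarrow> nat) \<Rightarrow> nat \<Rightarrow> nat" where
  "combine n L t g h = (\<lambda>x. if x \<in> {1..n} then L * h (inv t x) + g x else undefined)"

definition split_labellings ::
    "nat \<Rightarrow> nat \<Rightarrow> (nat \<Rightarrow> nat) \<Rightarrow> nat \<Rightarrow> nat \<Rightarrow> (nat \<Rightarrow> bool) \<Rightarrow>
      (((nat \<Rightarrow> nat) \<times> (nat \<Rightarrow> nat)) \<times> (nat \<Rightarrow> nat) \<times> (nat \<Rightarrow> nat)) set" where
  "split_labellings n L s a m P = (SIGMA (t, u) : factorizations n s.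
     compatible_labellings n t {a..<a+L} P \<times> compatible_labellings n u {0..<m} (\<lambda>_. True))"

context
  fixes n L :: nat and P :: "nat \<Rightarrow> bool"
  assumes L_pos: "0 < L" and P_periodic: "\<And>k z. P (L * k + z) = P z"
begin

lemma compatible_combine:
  assumes t: "t \<in> Sn n" and u: "u \<in> Sn n"
    and g: "g \<in> compatible_labellings n t {a..<a+L} P" and h: "compatible n u (\<lambda>_. True) h"
  shows "compatible n (t \<circ> u) P (combine n L t g h)"
  unfolding strictly_sorts_def
proof
  fix i assume i: "i \<in> {1..n-1}"
  have tp: "t permutes {1..n}" and up: "u permutes {1..n}" using t u by (auto simp: Sn_def)
  let ?G = "combine n L t g h"
  define x where "x = t (u i)"
  define y where "y = t (u (Suc i))"
  have "i \<in> {1..n}" "Suc i \<in> {1..n}" using i by auto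
  then have ui: "u i \<in> {1..n}" "u (Suc i) \<in> {1..n}"
    by (simp_all only: permutes_in_image[OF up])
  then have xy: "x \<in> {1..n}" "y \<in> {1..n}"
    unfolding x_def y_def by (simp_all only: permutes_in_image[OF tp])
  have Gx: "?G x = L * h (u i) + g x" and Gy: "?G y = L * h (u (Suc i)) + g y"
    using xy by (simp_all add: combine_def x_def y_def permutes_inverses(2)[OF tp])
  have gx: "a \<le> g x" "g x < a + L" and gy: "a \<le> g y" "g y < a + L"
    using g xy by (auto simp: compatible_labellings_def PiE_def Pi_def)
  have "tie_key (\<lambda>_. True) h (u i) < tie_key (\<lambda>_. True) h (u (Suc i))"
    using h i unfolding strictly_sorts_def by blast
  then consider "h (u i) < h (u (Suc i))" | "h (u i) = h (u (Suc i))" "u i < u (Suc i)"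
    unfolding tie_key_def less_prod_def by force
  then have "tie_key P ?G x < tie_key P ?G y"
  proof cases
    case 1
    then have "L * h (u i) + L \<le> L * h (u (Suc i))"
      by (metis Suc_le_eq mult_Suc_right mult_le_mono2 add.commute)
    then have "?G x < ?G y" using Gx Gy gx gy by linarith
    then show ?thesis unfolding tie_key_def less_prod_def by simp
  next
    case 2
    have "tie_key P g x < tie_key P g y"
      unfolding x_def y_def using g 2(2) ui
      by (auto simp: compatible_labellings_def intro: strictly_sorts_less)
    then show ?thesis using 2(1) Gx Gy P_periodic unfolding tie_key_def less_prod_def by auto
  qed
  then show "tie_key P ?G ((t \<circ> u) i) < tie_key P ?G ((t \<circ> u) (Suc i))"
    by (simp add: x_def y_def)
qed

lemma combine_mem_PiE:
  assumes t: "t \<in> Sn n" and g: "g \<in> {1..n} \<rightarrow>\<^sub>E {a..<a+L}" and h: "h \<in> {1..n} \<rightarrow>\<^sub>E {0..<m}"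
  shows "combine n L t g h \<in> {1..n} \<rightarrow>\<^sub>E {a..<a+L*m}"
proof
  fix x assume x: "x \<in> {1..n}"
  have "inv t x \<in> {1..n}"
    using t x by (simp only: Sn_def mem_Collect_eq permutes_in_image[OF permutes_inv])
  then have "h (inv t x) < m" using h by auto
  then have "L * h (inv t x) + L \<le> L * m"
    by (metis Suc_le_eq mult_Suc_right mult_le_mono2 add.commute)
  moreover have "g x \<in> {a..<a+L}" using g x by blast
  ultimately show "combine n L t g h x \<in> {a..<a+L*m}"
    using x by (auto simp: combine_def)
qed (auto simp: combine_def)

lemma combine_injective:
  assumes t: "t \<in> Sn n" and t': "t' \<in> Sn n"
    and g: "g \<in> compatible_labellings n t {a..<a+L} P"
    and g': "g' \<in> compatible_labellings n t' {a..<a+L} P"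
    and h: "h \<in> extensional {1..n}" and h': "h' \<in> extensional {1..n}"
    and eq: "combine n L t g h = combine n L t' g' h'"
  shows "g = g'" "t = t'" "h = h'"
proof -
  have tp: "t permutes {1..n}" using t by (simp add: Sn_def)
  have digits: "g x = g' x \<and> h (inv t x) = h' (inv t' x)" if x: "x \<in> {1..n}" for x
  proof -
    have "L * h (inv t x) + g x = L * h' (inv t' x) + g' x"
      using fun_cong[OF eq, of x] x by (simp add: combine_def)
    moreover have "a \<le> g x" "g x < a + L" "a \<le> g' x" "g' x < a + L"
      using g g' x by (auto simp: compatible_labellings_def)
    ultimately show ?thesis using mult_add_eq_mult_add_interval by metis
  qed
  show "g = g'"
  proof
    fix x show "g x = g' x"
      using digits[of x] g g'
      by (cases "x \<in> {1..n}") (auto simp: compatible_labellings_def PiE_def extensional_def)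
  qed
  then show "t = t'"
    using compatible_unique[OF t t', of P g'] g g' by (simp add: compatible_labellings_def)
  show "h = h'"
  proof
    fix i show "h i = h' i"
    proof (cases "i \<in> {1..n}")
      case True
      then have "t i \<in> {1..n}" by (simp only: permutes_in_image[OF tp])
      then show ?thesis
        using digits[of "t i"] permutes_inverses(2)[OF tp, of i] \<open>t = t'\<close> by simp
    qed (use h h' in \<open>simp add: extensional_def\<close>)
  qed
qed

lemma combine_surjective:
  assumes s: "s \<in> Sn n" and G: "G \<in> compatible_labellings n s {a..<a+L*m} P"
  obtains t u g h where "(t, u) \<in> factorizations n s"
    "g \<in> compatible_labellings n t {a..<a+L} P" "h \<in> compatible_labellings n u {0..<m} (\<lambda>_. True)"
    "G = combine n L t g h"
proof -
  have G_mem: "G \<in> {1..n} \<rightarrow>\<^sub>E {a..<a+L*m}" and G_comp: "compatible n s P G"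
    using G by (auto simp: compatible_labellings_def)
  define g where "g x = (if x \<in> {1..n} then a + (G x - a) mod L else undefined)" for x
  obtain t where t: "t \<in> Sn n" "compatible n t P g" using compatible_exists .
  have tp: "t permutes {1..n}" using t by (simp add: Sn_def)
  define h where "h i = (if i \<in> {1..n} then (G (t i) - a) div L else undefined)" for i
  obtain u where u: "u \<in> Sn n" "compatible n u (\<lambda>_. True) h" using compatible_exists .
  have g_mem: "g \<in> {1..n} \<rightarrow>\<^sub>E {a..<a+L}"
    using L_pos by (auto simp: g_def)
  have h_mem: "h \<in> {1..n} \<rightarrow>\<^sub>E {0..<m}"
  proof
    fix i assume i: "i \<in> {1..n}"
    then have "t i \<in> {1..n}" by (simp only: permutes_in_image[OF tp])
    then have "G (t i) \<in> {a..<a+L*m}" using G_mem by blast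
    then have "G (t i) - a < m * L" by (auto simp: mult.commute)
    then show "h i \<in> {0..<m}" using i L_pos by (simp add: h_def div_less_iff_less_mult)
  qed (auto simp: h_def)
  have G_eq: "G = combine n L t g h"
  proof
    fix x show "G x = combine n L t g h x"
    proof (cases "x \<in> {1..n}")
      case True
      then have "inv t x \<in> {1..n}" by (simp only: permutes_in_image[OF permutes_inv[OF tp]])
      moreover have "a \<le> G x" using G_mem True by fastforce
      ultimately show ?thesis
        using True by (simp add: combine_def g_def h_def permutes_inverses(1)[OF tp])
    qed (use G_mem in \<open>auto simp: combine_def\<close>)
  qed
  have "compatible n (t \<circ> u) P G"
    unfolding G_eq using t g_mem u by (intro compatible_combine) (auto simp: compatible_labellings_def)
  moreover have "t \<circ> u \<in> Sn n" using t u by (simp add: Sn_def permutes_compose)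
  ultimately have "t \<circ> u = s" using compatible_unique s G_comp by blast
  then show thesis
    using that[of t u g h] t u g_mem h_mem G_eq
    by (simp add: factorizations_def compatible_labellings_def)
qed

lemma inj_on_combine_split_labellings:
  "inj_on (\<lambda>((t, u), (g, h)). combine n L t g h) (split_labellings n L s a m P)"
proof (rule inj_onI)
  fix d d' assume "d \<in> split_labellings n L s a m P" "d' \<in> split_labellings n L s a m P"
    and "(\<lambda>((t, u), (g, h)). combine n L t g h) d = (\<lambda>((t, u), (g, h)). combine n L t g h) d'"
  moreover obtain t u g h t' u' g' h' where d: "d = ((t, u), (g, h))" "d' = ((t', u'), (g', h'))"
    by (metis prod.exhaust)
  ultimately have mem: "t \<in> Sn n" "u \<in> Sn n" "g \<in> compatible_labellings n t {a..<a+L} P"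
      "h \<in> compatible_labellings n u {0..<m} (\<lambda>_. True)"
    "t' \<in> Sn n" "u' \<in> Sn n" "g' \<in> compatible_labellings n t' {a..<a+L} P"
      "h' \<in> compatible_labellings n u' {0..<m} (\<lambda>_. True)"
    and eq: "combine n L t g h = combine n L t' g' h'"
    by (auto simp: split_labellings_def factorizations_def)
  then have "h \<in> extensional {1..n}" "h' \<in> extensional {1..n}"
    by (simp_all add: compatible_labellings_def PiE_def)
  note same = combine_injective[OF mem(1,5,3,7) this eq]
  then have "u = u'"
    using compatible_unique[OF mem(2,6)] mem(4,8) by (auto simp: compatible_labellings_def)
  with same show "d = d'" using d by simp
qed

lemma combine_image_split_labellings:
  assumes s: "s \<in> Sn n"
  shows "(\<lambda>((t, u), (g, h)). combine n L t g h) ` split_labellings n L s a m P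
    = compatible_labellings n s {a..<a+L*m} P"
proof (intro subset_antisym subsetI)
  fix G assume "G \<in> (\<lambda>((t, u), (g, h)). combine n L t g h) ` split_labellings n L s a m P"
  then obtain t u g h where "t \<in> Sn n" "u \<in> Sn n" "t \<circ> u = s"
    "g \<in> compatible_labellings n t {a..<a+L} P" "h \<in> compatible_labellings n u {0..<m} (\<lambda>_. True)"
    "G = combine n L t g h"
    by (auto simp: split_labellings_def factorizations_def)
  then show "G \<in> compatible_labellings n s {a..<a+L*m} P"
    using compatible_combine combine_mem_PiE by (auto simp: compatible_labellings_def)
next
  fix G assume "G \<in> compatible_labellings n s {a..<a+L*m} P"
  then obtain t u g h where "(t, u) \<in> factorizations n s"
    "g \<in> compatible_labellings n t {a..<a+L} P" "h \<in> compatible_labellings n u {0..<m} (\<lambda>_. True)"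
    "G = combine n L t g h"
    using combine_surjective[OF s] by blast
  then show "G \<in> (\<lambda>((t, u), (g, h)). combine n L t g h) ` split_labellings n L s a m P"
    by (intro rev_image_eqI[of "((t, u), (g, h))"]) (auto simp: split_labellings_def)
qed

lemma card_compatible_labellings_mult:
  assumes "s \<in> Sn n"
  shows "card (compatible_labellings n s {a..<a+L*m} P) =
    (\<Sum>(t, u) \<in> factorizations n s. card (compatible_labellings n t {a..<a+L} P) *
                                    card (compatible_labellings n u {0..<m} (\<lambda>_. True)))"
proof -
  have "card (compatible_labellings n s {a..<a+L*m} P) = card (split_labellings n L s a m P)"
    using card_image[OF inj_on_combine_split_labellings] combine_image_split_labellings[OF assms]
    by metis
  also have "\<dots> = (\<Sum>(t, u) \<in> factorizations n s. card (compatible_labellings n t {a..<a+L} P) *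
                                    card (compatible_labellings n u {0..<m} (\<lambda>_. True)))"
    unfolding split_labellings_def
    by (subst card_SigmaI)
      (auto simp: finite_factorizations finite_compatible_labellings card_cartesian_product
        split: prod.splits intro!: sum.cong)
  finally show ?thesis .
qed

end

section \<open>Weakly increasing words with prescribed strict ascents\<close>

lemma sorted_wrt_less_nth_add_diff:
  assumes "sorted_wrt (<) (bs :: nat list)" "i \<le> j" "j < length bs"
  shows "bs ! i + (j - i) \<le> bs ! j"
  using assms(2,3)
proof (induction j rule: dec_induct)
  case (step j)
  then have "bs ! j < bs ! Suc j" using sorted_wrt_nth_less[OF assms(1), of j "Suc j"] by simp
  then show ?case using step by (simp add: Suc_diff_le)
qed simp

lemma card_strictly_sorted_lists:
  fixes A :: "'a::linorder set"
  assumes "finite A"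
  shows "card {xs. length xs = n \<and> set xs \<subseteq> A \<and> sorted_wrt (<) xs} = card A choose n"
proof -
  have "bij_betw set {xs. length xs = n \<and> set xs \<subseteq> A \<and> sorted_wrt (<) xs} {B. B \<subseteq> A \<and> card B = n}"
  proof (rule bij_betw_byWitness[where f' = sorted_list_of_set])
    show "\<forall>B\<in>{B. B \<subseteq> A \<and> card B = n}. set (sorted_list_of_set B) = B"
      using assms by (auto simp: finite_subset)
    show "sorted_list_of_set ` {B. B \<subseteq> A \<and> card B = n}
        \<subseteq> {xs. length xs = n \<and> set xs \<subseteq> A \<and> sorted_wrt (<) xs}"
    proof (rule image_subsetI)
      fix B assume B: "B \<in> {B. B \<subseteq> A \<and> card B = n}"
      then have "finite B" using assms finite_subset by blast
      with B show "sorted_list_of_set B \<in> {xs. length xs = n \<and> set xs \<subseteq> A \<and> sorted_wrt (<) xs}"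
        by simp
    qed
  qed (auto simp: strict_sorted_iff distinct_card sorted_list_of_set_sort_remdups
      distinct_remdups_id sorted_sort_id)
  then show ?thesis using n_subsets[OF assms] by (simp add: bij_betw_same_card)
qed

(* Adding slack D i to the i-th entry turns a weakly increasing word that is strict at the
   positions in D into a strictly increasing one. *)
definition slack :: "nat set \<Rightarrow> nat \<Rightarrow> nat" where
  "slack D i = card ({1..i} - D)"

definition slack_shift :: "nat set \<Rightarrow> nat list \<Rightarrow> nat list" where
  "slack_shift D as = map (\<lambda>i. as ! i + slack D i) [0..<length as]"

definition slack_unshift :: "nat set \<Rightarrow> nat list \<Rightarrow> nat list" where
  "slack_unshift D bs = map (\<lambda>i. bs ! i - slack D i) [0..<length bs]"

lemma length_slack_shift [simp]: "length (slack_shift D as) = length as"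
  by (simp add: slack_shift_def)

lemma length_slack_unshift [simp]: "length (slack_unshift D bs) = length bs"
  by (simp add: slack_unshift_def)

lemma slack_Suc: "slack D (Suc i) = slack D i + (if Suc i \<in> D then 0 else 1)"
proof (cases "Suc i \<in> D")
  case True
  then have "{1..Suc i} - D = {1..i} - D" by (auto simp: le_Suc_eq)
  then show ?thesis using True by (simp add: slack_def)
next
  case False
  then have "{1..Suc i} - D = insert (Suc i) ({1..i} - D)" by auto
  then show ?thesis using False by (simp add: slack_def)
qed

lemma slack_le: "slack D i \<le> i"
  unfolding slack_def using card_mono[of "{1..i}" "{1..i} - D"] by auto

lemma slack_mono:
  assumes "i \<le> j"
  shows "slack D i \<le> slack D j" "slack D j \<le> slack D i + (j - i)"
  using assms by (induction j rule: dec_induct) (auto simp: slack_Suc Suc_diff_le)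

lemma slack_eq_diff_card: "D \<subseteq> {1..k} \<Longrightarrow> slack D k = k - card D"
  unfolding slack_def by (simp add: card_Diff_subset finite_subset)

lemma slack_unshift_shift: "slack_unshift D (slack_shift D as) = as"
  by (rule nth_equalityI) (simp_all add: slack_shift_def slack_unshift_def)

lemma slack_le_nth_strictly_sorted:
  assumes "sorted_wrt (<) bs" "i < length bs"
  shows "slack D i \<le> bs ! i"
  using sorted_wrt_less_nth_add_diff[OF assms(1), of 0 i] assms(2) slack_le[of D i] by simp

lemma slack_shift_unshift: "sorted_wrt (<) bs \<Longrightarrow> slack_shift D (slack_unshift D bs) = bs"
  by (rule nth_equalityI) (simp_all add: slack_shift_def slack_unshift_def slack_le_nth_strictly_sorted)

lemma strictly_sorted_slack_shift:
  assumes "sorted as" "\<forall>s\<in>D. as ! (s - 1) < as ! s"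
  shows "sorted_wrt (<) (slack_shift D as)"
proof (subst sorted_wrt_iff_nth_Suc_transp)
  show "transp ((<) :: nat \<Rightarrow> _)" by (auto intro: transpI)
  show "\<forall>i. Suc i < length (slack_shift D as) \<longrightarrow> slack_shift D as ! i < slack_shift D as ! Suc i"
  proof (intro allI impI)
    fix i assume i: "Suc i < length (slack_shift D as)"
    then have "as ! i \<le> as ! Suc i" using assms(1) by (simp add: slack_shift_def sorted_iff_nth_Suc)
    moreover have "as ! i < as ! Suc i" if "Suc i \<in> D" using assms(2) that by fastforce
    ultimately show "slack_shift D as ! i < slack_shift D as ! Suc i"
      using i by (auto simp: slack_shift_def slack_Suc)
  qed
qed

lemma set_slack_shift_subset:
  assumes "set as \<subseteq> {0..<m}"
  shows "set (slack_shift D as) \<subseteq> {0..<m + slack D (length as - 1)}"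
proof
  fix x assume "x \<in> set (slack_shift D as)"
  then obtain i where i: "i < length as" "x = as ! i + slack D i" by (auto simp: slack_shift_def)
  then have "as ! i < m" using assms nth_mem by fastforce
  moreover have "slack D i \<le> slack D (length as - 1)" using i by (intro slack_mono) simp
  ultimately show "x \<in> {0..<m + slack D (length as - 1)}" using i by simp
qed

lemma sorted_slack_unshift:
  assumes bs: "sorted_wrt (<) bs" and D: "D \<subseteq> {1..length bs - 1}"
  shows "sorted (slack_unshift D bs)" "\<forall>s\<in>D. slack_unshift D bs ! (s - 1) < slack_unshift D bs ! s"
proof -
  have step: "slack_unshift D bs ! i \<le> slack_unshift D bs ! Suc i"
    "Suc i \<in> D \<Longrightarrow> slack_unshift D bs ! i < slack_unshift D bs ! Suc i"
    if i: "Suc i < length bs" for i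
  proof -
    have "bs ! i < bs ! Suc i" using sorted_wrt_nth_less[OF bs, of i "Suc i"] i by simp
    moreover have "slack D i \<le> bs ! i" using slack_le_nth_strictly_sorted[OF bs] i by simp
    ultimately show "slack_unshift D bs ! i \<le> slack_unshift D bs ! Suc i"
      "Suc i \<in> D \<Longrightarrow> slack_unshift D bs ! i < slack_unshift D bs ! Suc i"
      using i by (auto simp: slack_unshift_def slack_Suc)
  qed
  then show "sorted (slack_unshift D bs)"
    by (simp add: sorted_iff_nth_Suc slack_unshift_def)
  show "\<forall>s\<in>D. slack_unshift D bs ! (s - 1) < slack_unshift D bs ! s"
  proof
    fix s assume "s \<in> D"
    moreover from this obtain i where "s = Suc i" "Suc i < length bs"
      using D by (cases s) auto
    ultimately show "slack_unshift D bs ! (s - 1) < slack_unshift D bs ! s"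
      using step by simp
  qed
qed

lemma set_slack_unshift_subset:
  assumes bs: "sorted_wrt (<) bs" and set_bs: "set bs \<subseteq> {0..<m + slack D (length bs - 1)}"
  shows "set (slack_unshift D bs) \<subseteq> {0..<m}"
proof
  fix x assume "x \<in> set (slack_unshift D bs)"
  then obtain i where i: "i < length bs" "x = bs ! i - slack D i"
    by (auto simp: slack_unshift_def)
  have "bs ! i + (length bs - 1 - i) \<le> bs ! (length bs - 1)"
    using sorted_wrt_less_nth_add_diff[OF bs, of i "length bs - 1"] i by simp
  moreover have "bs ! (length bs - 1) \<in> set bs" using i by (intro nth_mem) simp
  then have "bs ! (length bs - 1) < m + slack D (length bs - 1)" using set_bs by auto
  moreover have "slack D (length bs - 1) \<le> slack D i + (length bs - 1 - i)"
    using i by (intro slack_mono) simp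
  moreover have "slack D i \<le> bs ! i" using slack_le_nth_strictly_sorted[OF bs i(1)] .
  ultimately show "x \<in> {0..<m}" using i by simp
qed

lemma card_sorted_lists_strict_at:
  assumes D: "D \<subseteq> {1..n-1}"
  shows "card {as :: nat list. length as = n \<and> set as \<subseteq> {0..<m} \<and> sorted as \<and>
      (\<forall>s\<in>D. as ! (s - 1) < as ! s)} = (m + (n - 1 - card D)) choose n"
proof -
  let ?A = "{as :: nat list. length as = n \<and> set as \<subseteq> {0..<m} \<and> sorted as \<and>
      (\<forall>s\<in>D. as ! (s - 1) < as ! s)}"
  let ?B = "{bs :: nat list. length bs = n \<and> set bs \<subseteq> {0..<m + slack D (n - 1)} \<and> sorted_wrt (<) bs}"
  have "bij_betw (slack_shift D) ?A ?B"
  proof (rule bij_betw_byWitness[where f' = "slack_unshift D"])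
    show "slack_shift D ` ?A \<subseteq> ?B"
    proof (rule image_subsetI)
      fix as assume "as \<in> ?A"
      then show "slack_shift D as \<in> ?B"
        using set_slack_shift_subset[of as m D] strictly_sorted_slack_shift[of as D] by simp
    qed
    show "slack_unshift D ` ?B \<subseteq> ?A"
    proof (rule image_subsetI)
      fix bs assume "bs \<in> ?B"
      then show "slack_unshift D bs \<in> ?A"
        using set_slack_unshift_subset[of bs m D] sorted_slack_unshift[of bs D] D by simp
    qed
  qed (simp_all add: slack_unshift_shift slack_shift_unshift)
  then have "card ?A = (m + slack D (n - 1)) choose n"
    using card_strictly_sorted_lists[of "{0..<m + slack D (n - 1)}" n]
    by (simp add: bij_betw_same_card)
  then show ?thesis using slack_eq_diff_card[OF D] by simp
qed

definition descents :: "nat \<Rightarrow> (nat \<Rightarrow> nat) \<Rightarrow> nat set" where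
  "descents n u = {i \<in> {1..n-1}. u i > u (Suc i)}"

lemma card_descents: "card (descents n u) = des n u"
  by (simp add: descents_def des_def)

lemma card_compatible_labellings_all_plus:
  assumes u: "u \<in> Sn n"
  shows "card (compatible_labellings n u {0..<m} (\<lambda>_. True)) = (m + (n - 1 - des n u)) choose n"
proof -
  have D: "descents n u \<subseteq> {1..n-1}" by (auto simp: descents_def)
  have "card (compatible_labellings n u {0..<m} (\<lambda>_. True)) = Ncount n u {0..<m} (\<lambda>_. True)"
    by (rule Ncount_eq_card_compatible_labellings[OF u, symmetric])
  also have "\<dots> = card {as :: nat list. length as = n \<and> set as \<subseteq> {0..<m} \<and> sorted as \<and>
      (\<forall>s\<in>descents n u. as ! (s - 1) < as ! s)}"
    unfolding Ncount_def
  proof (intro arg_cong[where f = card] Collect_cong)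
    fix as :: "nat list"
    show "(length as = n \<and> set as \<subseteq> {0..<m} \<and> sorted as \<and> (\<forall>s\<in>{1..n-1}.
        (u s < u (Suc s) \<longrightarrow> as!(s-1) < as!s \<or> (as!(s-1) = as!s \<and> True)) \<and>
        (u s > u (Suc s) \<longrightarrow> as!(s-1) < as!s \<or> (as!(s-1) = as!s \<and> \<not> True)))) \<longleftrightarrow>
      (length as = n \<and> set as \<subseteq> {0..<m} \<and> sorted as \<and>
        (\<forall>s\<in>descents n u. as ! (s - 1) < as ! s))"
      using sorted_iff_adjacent[of as n] by (auto simp: descents_def le_less)
  qed
  also have "\<dots> = (m + (n - 1 - des n u)) choose n"
    using card_sorted_lists_strict_at[OF D] by (simp add: card_descents)
  finally show ?thesis .
qed

section \<open>Multiplicativity and its polynomial extension\<close>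

lemma Ncount_interval_mult:
  fixes L :: nat and P :: "nat \<Rightarrow> bool"
  assumes "0 < L" "\<And>k z. P (L * k + z) = P z" "s \<in> Sn n"
  shows "Ncount n s {a..<a+L*m} P =
    (\<Sum>(t, u) \<in> factorizations n s. Ncount n t {a..<a+L} P * ((m + (n - 1 - des n u)) choose n))"
proof -
  have "Ncount n s {a..<a+L*m} P = card (compatible_labellings n s {a..<a+L*m} P)"
    by (rule Ncount_eq_card_compatible_labellings[OF assms(3)])
  also have "\<dots> = (\<Sum>(t, u) \<in> factorizations n s. card (compatible_labellings n t {a..<a+L} P) *
                                    card (compatible_labellings n u {0..<m} (\<lambda>_. True)))"
    by (rule card_compatible_labellings_mult[where P = P, OF assms])
  also have "\<dots> = (\<Sum>(t, u) \<in> factorizations n s. Ncount n t {a..<a+L} P * ((m + (n - 1 - des n u)) choose n))"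
    by (rule sum.cong)
      (auto simp: factorizations_def Ncount_eq_card_compatible_labellings card_compatible_labellings_all_plus)
  finally show ?thesis .
qed

lemma Omega'_mult:
  assumes "s \<in> Sn n" "k \<ge> 1"
  shows "Omega' n s (k * m) =
    (\<Sum>(t, u) \<in> factorizations n s. Omega' n t k * ((m + (n - 1 - des n u)) choose n))"
proof -
  have "{1..2 * j} = {1..<1 + 2 * j}" for j :: nat by auto
  then show ?thesis
    using Ncount_interval_mult[of "2 * k" even, OF _ _ assms(1), of 1 m] assms(2)
    by (simp add: Omega'_def mult.assoc)
qed

lemma OmegaBar'_mult:
  assumes "s \<in> Sn n" "k \<ge> 1" "m \<ge> 1"
  shows "OmegaBar' n s (k * m) =
    (\<Sum>(t, u) \<in> factorizations n s. OmegaBar' n t k * ((m + (n - 1 - des n u)) choose n))"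
proof -
  have "{0..2 * j - 1} = {0..<0 + 2 * j}" if "j \<ge> 1" for j :: nat using that by auto
  moreover have "k * m \<ge> 1" using assms(2,3) by simp
  ultimately show ?thesis
    using Ncount_interval_mult[of "2 * k" even, OF _ _ assms(1), of 0 m] assms(2)
    by (simp add: OmegaBar'_def mult.assoc)
qed

lemma poly_eqI_of_nat:
  fixes p q :: "'a::{idom, ring_char_0} poly"
  assumes "\<And>k. k \<ge> 1 \<Longrightarrow> poly p (of_nat k) = poly q (of_nat k)"
  shows "p = q"
proof (rule ccontr)
  assume "p \<noteq> q"
  then have "finite {x. poly (p - q) x = 0}" by (intro poly_roots_finite) simp
  moreover have "of_nat ` {1..} \<subseteq> {x. poly (p - q) x = 0}" using assms by auto
  ultimately have "finite (of_nat ` {1..} :: 'a set)" by (rule finite_subset[rotated])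
  then have "finite {1::nat..}" by (rule finite_imageD) (simp add: inj_on_def)
  then show False using infinite_Ici by blast
qed

lemma The_interpolating_poly:
  fixes f :: "nat \<Rightarrow> 'a::{idom, ring_char_0}"
  assumes "\<And>k. k \<ge> 1 \<Longrightarrow> poly q (of_nat k) = f k"
  shows "(THE q. \<forall>k\<ge>1. poly q (of_nat k) = f k) = q"
  using assms by (intro the_equality) (auto intro: poly_eqI_of_nat)

definition gbinomial_poly :: "'a::field_char_0 \<Rightarrow> nat \<Rightarrow> 'a poly" where
  "gbinomial_poly c k = smult (1 / fact k) (\<Prod>i<k. [:c - of_nat i, 1:])"

lemma poly_gbinomial_poly: "poly (gbinomial_poly c k) y = (y + c) gchoose k"
  by (simp add: gbinomial_poly_def gbinomial_prod_rev poly_prod atLeast0LessThan field_simps)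

lemma poly_gbinomial_poly_of_nat:
  "poly (gbinomial_poly (of_nat c) k) (of_nat m) = (of_nat ((m + c) choose k) :: 'a::field_char_0)"
  by (simp add: poly_gbinomial_poly binomial_gbinomial)

lemma phi_eq_poly: "phi n y u = poly (gbinomial_poly (of_nat (n - 1 - des n u)) n) y"
  by (simp add: phi_def poly_gbinomial_poly)

lemma phi_of_nat: "phi n (of_nat m) u = of_nat ((m + (n - 1 - des n u)) choose n)"
  by (simp add: phi_def binomial_gbinomial)

context
  fixes n :: nat and W :: "(nat \<Rightarrow> nat) \<Rightarrow> nat \<Rightarrow> nat"
  assumes W_mult: "\<And>s k m. s \<in> Sn n \<Longrightarrow> k \<ge> 1 \<Longrightarrow> m \<ge> 1 \<Longrightarrow>
      W s (k * m) = (\<Sum>(t, u) \<in> factorizations n s. W t k * ((m + (n - 1 - des n u)) choose n))"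
begin

lemma interpolants_mult_phi:
  fixes Q :: "(nat \<Rightarrow> nat) \<Rightarrow> rat poly"
  assumes Q: "\<And>t k. t \<in> Sn n \<Longrightarrow> k \<ge> 1 \<Longrightarrow> poly (Q t) (of_nat k) = of_nat (W t k)"
    and s: "s \<in> Sn n"
  shows "(\<Sum>(t, u) \<in> factorizations n s. poly (Q t) w * phi n y u) = poly (Q s) (w * y)"
proof -
  let ?B = "\<lambda>u. gbinomial_poly (of_nat (n - 1 - des n u)) n :: rat poly"
  have at_nats: "(\<Sum>(t, u) \<in> factorizations n s. poly (Q t) (of_nat k) * phi n (of_nat m) u)
      = poly (Q s) (of_nat k * of_nat m)" if "k \<ge> 1" "m \<ge> 1" for k m
  proof -
    have "(\<Sum>(t, u) \<in> factorizations n s. poly (Q t) (of_nat k) * phi n (of_nat m) u)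
        = of_nat (\<Sum>(t, u) \<in> factorizations n s. W t k * ((m + (n - 1 - des n u)) choose n))"
      unfolding of_nat_sum
      by (rule sum.cong) (auto simp: factorizations_def Q[OF _ that(1)] phi_of_nat)
    also have "\<dots> = poly (Q s) (of_nat k * of_nat m)"
      using W_mult[OF s that] Q[OF s, of "k * m"] that by simp
    finally show ?thesis .
  qed
  have at_nat_w: "(\<Sum>(t, u) \<in> factorizations n s. poly (Q t) (of_nat k) * phi n y u)
      = poly (Q s) (of_nat k * y)" if "k \<ge> 1" for k y
  proof -
    have "(\<Sum>(t, u) \<in> factorizations n s. smult (poly (Q t) (of_nat k)) (?B u))
        = Q s \<circ>\<^sub>p [:0, of_nat k:]"
      by (rule poly_eqI_of_nat)
        (use at_nats[OF that] in \<open>simp add: poly_sum poly_pcompose case_prod_beta phi_eq_poly mult.commute\<close>)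
    from arg_cong[where f = "\<lambda>p. poly p y", OF this] show ?thesis
      by (simp add: poly_sum poly_pcompose case_prod_beta phi_eq_poly mult.commute)
  qed
  have "(\<Sum>(t, u) \<in> factorizations n s. smult (phi n y u) (Q t)) = Q s \<circ>\<^sub>p [:0, y:]"
    by (rule poly_eqI_of_nat)
      (use at_nat_w in \<open>simp add: poly_sum poly_pcompose case_prod_beta mult.commute\<close>)
  from arg_cong[where f = "\<lambda>p. poly p w", OF this] show ?thesis
    by (simp add: poly_sum poly_pcompose case_prod_beta mult.commute)
qed

lemma poly_The_interpolant:
  assumes s: "s \<in> Sn n" and k: "k \<ge> 1"
  shows "poly (THE q. \<forall>k\<ge>1. poly q (of_nat k) = (of_nat (W s k) :: rat)) (of_nat k) = of_nat (W s k)"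
proof -
  \<comment> \<open>The case k = 1 of the multiplicativity writes W s as a polynomial in m.\<close>
  define q where "q = (\<Sum>(t, u) \<in> factorizations n s.
    smult (of_nat (W t 1)) (gbinomial_poly (of_nat (n - 1 - des n u)) n) :: rat poly)"
  have q: "poly q (of_nat m) = of_nat (W s m)" if "m \<ge> 1" for m
    using W_mult[OF s order_refl that]
    by (simp add: q_def poly_sum case_prod_beta poly_gbinomial_poly_of_nat)
  then have "(THE q. \<forall>k\<ge>1. poly q (of_nat k) = (of_nat (W s k) :: rat)) = q"
    by (rule The_interpolating_poly)
  then show ?thesis using q[OF k] by simp
qed

lemma ga_mult_interpolants_phi:
  fixes Q :: "(nat \<Rightarrow> nat) \<Rightarrow> rat poly"
  assumes Q_def: "\<And>t. Q t = (THE q. \<forall>k\<ge>1. poly q (of_nat k) = of_nat (W t k))"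
    and s: "s \<in> Sn n"
  shows "ga_mult n (\<lambda>t. poly (Q t) (x / 2)) (phi n y) s = poly (Q s) (x * y / 2)"
proof -
  have "poly (Q t) (of_nat k) = of_nat (W t k)" if "t \<in> Sn n" "k \<ge> 1" for t k
    unfolding Q_def using poly_The_interpolant[OF that] .
  then show ?thesis
    using interpolants_mult_phi[OF _ s, of Q "x / 2" y]
    by (simp add: ga_mult_eq_sum_factorizations)
qed

end

theorem theorem3p7:
  fixes n :: nat
  assumes "n \<ge> 1"
  shows "\<forall>x y :: rat. \<forall>s \<in> Sn n.
           ga_mult n (rho n x) (phi n y) s = rho n (x * y) s \<and>
           ga_mult n (rhobar n x) (phi n y) s = rhobar n (x * y) s"
proof (intro allI ballI conjI)
  fix x y :: rat and s assume s: "s \<in> Sn n"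
  show "ga_mult n (rho n x) (phi n y) s = rho n (x * y) s"
    using ga_mult_interpolants_phi[OF Omega'_mult Omega'_poly_def s, of x y]
    by (simp add: rho_def[abs_def])
  show "ga_mult n (rhobar n x) (phi n y) s = rhobar n (x * y) s"
    using ga_mult_interpolants_phi[OF OmegaBar'_mult OmegaBar'_poly_def s, of x y]
    by (simp add: rhobar_def[abs_def])
qed

end
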